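(* Let $m,n\ge1$ and consider the product of simplices $\Delta^{m-1}\times\Delta^{n-1}\subset\mathbb{R}^m\times\mathbb{R}^n$. Given any subdivision of the vertices of $\Delta^{m-1}\times\Delta^{n-1}$ and any interior cell $C$ of this subdivision, there exist positive real weights $w_1,\dots,w_m$ with $\sum_i w_i=1$ such that $C$ contains the point $(w_1,\dots,w_m,\tfrac1n\mathbf{1}_n)$ in its relative interior.
   Context: $\Delta^{k-1}=\mathrm{conv}(e_1,\dots,e_k)\subset\mathbb{R}^k$ is the standard simplex, so the vertices of $\Delta^{m-1}\times\Delta^{n-1}$ are the points $(e_i,e_j)$. A subdivision of the vertices is a polyhedral subdivision of $\Delta^{m-1}\times\Delta^{n-1}$ whose cells are convex hulls of subsets of these vertices (cells cover the product, and any two intersect in a common face). A cell is interior if it is not contained in any facet of $\Delta^{m-1}\times\Delta^{n-1}$. $\mathbf{1}_n$ is the all-ones vector. *)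

theory Defs
  imports "HOL-Analysis.Analysis"
begin

definition std_simplex :: "(real^'k) set" where
  "std_simplex = convex hull {axis i 1 | i. True}"

definition prod_simplex :: "((real^'m) \<times> (real^'n)) set" where
  "prod_simplex = std_simplex \<times> std_simplex"

definition prod_vertices :: "((real^'m) \<times> (real^'n)) set" where
  "prod_vertices = {(axis i 1, axis j 1) | i j. True}"

definition vertex_subdivision :: "((real^'m) \<times> (real^'n)) set set \<Rightarrow> bool" where
  "vertex_subdivision \<C> \<longleftrightarrow>
     finite \<C> \<and>
     (\<forall>C\<in>\<C>. C \<noteq> {} \<and> (\<exists>V. V \<subseteq> prod_vertices \<and> C = convex hull V)) \<and>
     \<Union>\<C> = prod_simplex \<and>
     (\<forall>C\<in>\<C>. \<forall>D\<in>\<C>. (C \<inter> D) face_of C \<and> (C \<inter> D) face_of D)"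

definition interior_cell :: "((real^'m) \<times> (real^'n)) set \<Rightarrow> bool" where
  "interior_cell C \<longleftrightarrow> \<not> (\<exists>F. F facet_of prod_simplex \<and> C \<subseteq> F)"

end

theory Submission
  imports Defs
begin

text \<open>Write the cell as \<open>C = conv {(e\<^sub>i, e\<^sub>j) | (i, j) \<in> E}\<close>. If some row \<open>i\<close> (column \<open>j\<close>)
  missed \<open>E\<close>, then \<open>C\<close> would lie in the face \<open>x\<^sub>i = 0\<close> (\<open>y\<^sub>j = 0\<close>) of the product, hence in a facet.
  So \<open>E\<close> meets every row and every column. Spreading mass \<open>1/n\<close> evenly over the elements of \<open>E\<close>
  in each column gives a convex combination with all coefficients positive; it lies in the
  relative interior of \<open>C\<close>, its second factor is \<open>1\<^sub>n/n\<close>, and since every row is hit, all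
  coordinates of its first factor are positive.\<close>

definition prod_vertex :: "'m \<times> 'n \<Rightarrow> (real^'m) \<times> (real^'n)" where
  "prod_vertex = (\<lambda>(i, j). (axis i 1, axis j 1))"

lemma prod_vertices_eq_range: "prod_vertices = range prod_vertex"
  unfolding prod_vertices_def prod_vertex_def by auto

lemma prod_simplex_eq_convex_hull: "prod_simplex = convex hull prod_vertices"
proof -
  have vertices_eq: "prod_vertices = {axis i 1 | i. True} \<times> {axis j 1 | j. True}"
    unfolding prod_vertices_def by auto
  show ?thesis
    unfolding prod_simplex_def std_simplex_def vertices_eq by (simp add: convex_hull_Times)
qed

lemma polyhedron_prod_simplex: "polyhedron prod_simplex"
  unfolding prod_simplex_eq_convex_hull prod_vertices_eq_range
  by (simp add: polytope_convex_hull polytope_imp_polyhedron)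

lemma inner_prod_vertex: "(a, b) \<bullet> prod_vertex (i, j) = a $ i + b $ j"
  by (simp add: prod_vertex_def inner_Pair inner_axis)

lemma fst_sum_prod_vertex:
  assumes "finite E"
  shows "fst (\<Sum>e\<in>E. c e *\<^sub>R prod_vertex e) $ i = (\<Sum>e\<in>{e\<in>E. fst e = i}. c e)"
proof -
  have "fst (\<Sum>e\<in>E. c e *\<^sub>R prod_vertex e) $ i = (\<Sum>e\<in>E. if fst e = i then c e else 0)"
    unfolding fst_sum sum_component
    by (rule sum.cong) (auto simp: prod_vertex_def axis_def split: prod.splits)
  then show ?thesis
    by (simp add: sum.inter_filter[OF assms])
qed

lemma snd_sum_prod_vertex:
  assumes "finite E"
  shows "snd (\<Sum>e\<in>E. c e *\<^sub>R prod_vertex e) $ j = (\<Sum>e\<in>{e\<in>E. snd e = j}. c e)"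
proof -
  have "snd (\<Sum>e\<in>E. c e *\<^sub>R prod_vertex e) $ j = (\<Sum>e\<in>E. if snd e = j then c e else 0)"
    unfolding snd_sum sum_component
    by (rule sum.cong) (auto simp: prod_vertex_def axis_def split: prod.splits)
  then show ?thesis
    by (simp add: sum.inter_filter[OF assms])
qed

lemma interior_cell_not_subset_supporting_hyperplane:
  assumes "interior_cell C" "C \<noteq> {}" "C \<subseteq> prod_simplex"
    and nonneg: "\<forall>v\<in>prod_vertices. 0 \<le> a \<bullet> v"
    and "\<exists>v\<in>prod_vertices. a \<bullet> v \<noteq> 0"
  shows "\<not> C \<subseteq> {x. a \<bullet> x = 0}"
proof
  assume C_sub: "C \<subseteq> {x. a \<bullet> x = 0}"
  let ?F = "prod_simplex \<inter> {x. a \<bullet> x = 0}"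
  have "prod_simplex \<subseteq> {x. 0 \<le> a \<bullet> x}"
    unfolding prod_simplex_eq_convex_hull
    using nonneg by (intro hull_minimal convex_halfspace_ge) auto
  then have "?F face_of prod_simplex"
    by (intro face_of_Int_supporting_hyperplane_ge)
       (auto simp: prod_simplex_eq_convex_hull convex_convex_hull)
  moreover have "?F \<noteq> {}"
    using assms(2,3) C_sub by blast
  moreover have "?F \<noteq> prod_simplex"
    using assms(5) hull_subset[of prod_vertices convex]
    unfolding prod_simplex_eq_convex_hull by blast
  ultimately obtain F where "F facet_of prod_simplex" "?F \<subseteq> F"
    using face_of_polyhedron_subset_facet[OF polyhedron_prod_simplex] by blast
  with assms(1,3) C_sub show False
    unfolding interior_cell_def by blast
qed

lemma interior_cell_hull_prod_vertex_not_in_face: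
  fixes a :: "real^'m" and b :: "real^'n"
  assumes "interior_cell (convex hull (prod_vertex ` E))" "E \<noteq> {}"
    and "\<forall>i. 0 \<le> a $ i" "\<forall>j. 0 \<le> b $ j" "0 < a $ i + b $ j"
  shows "\<exists>(k, l)\<in>E. a $ k + b $ l \<noteq> 0"
proof (rule ccontr)
  assume "\<not> ?thesis"
  then have "convex hull (prod_vertex ` E) \<subseteq> {x. (a, b) \<bullet> x = 0}"
    by (intro hull_minimal convex_hyperplane) (auto simp: inner_prod_vertex)
  moreover have "convex hull (prod_vertex ` E) \<subseteq> prod_simplex"
    unfolding prod_simplex_eq_convex_hull prod_vertices_eq_range by (rule hull_mono) blast
  moreover have "\<forall>v\<in>prod_vertices. 0 \<le> (a, b) \<bullet> v"
    using assms(3,4) by (auto simp: prod_vertices_eq_range inner_prod_vertex)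
  moreover have "\<exists>v\<in>prod_vertices. (a, b) \<bullet> v \<noteq> 0"
    using assms(5) by (metis inner_prod_vertex less_irrefl rangeI prod_vertices_eq_range)
  moreover have "convex hull (prod_vertex ` E) \<noteq> {}"
    using assms(2) by simp
  ultimately show False
    using interior_cell_not_subset_supporting_hyperplane[OF assms(1)] by blast
qed

lemma interior_cell_hull_prod_vertex_rows:
  assumes "interior_cell (convex hull (prod_vertex ` E))" "E \<noteq> {}"
  shows "fst ` E = UNIV"
proof -
  have "\<exists>e\<in>E. fst e = i" for i
    using interior_cell_hull_prod_vertex_not_in_face[OF assms, of "axis i 1" 0 i undefined]
    by (force simp: axis_def split: if_splits)
  then show ?thesis by force
qed

lemma interior_cell_hull_prod_vertex_columns:
  assumes "interior_cell (convex hull (prod_vertex ` E))" "E \<noteq> {}"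
  shows "snd ` E = UNIV"
proof -
  have "\<exists>e\<in>E. snd e = j" for j
    using interior_cell_hull_prod_vertex_not_in_face[OF assms, of 0 "axis j 1" undefined j]
    by (force simp: axis_def split: if_splits)
  then show ?thesis by force
qed

lemma exists_positive_weights_with_fibre_sums:
  assumes "finite E" and r_pos: "\<forall>y\<in>g ` E. 0 < (r y :: real)"
  shows "\<exists>c. (\<forall>e\<in>E. 0 < c e) \<and> (\<forall>y\<in>g ` E. (\<Sum>e\<in>{e\<in>E. g e = y}. c e) = r y)"
proof -
  define d where "d y = card {e\<in>E. g e = y}" for y
  have d_pos: "0 < d y" if "y \<in> g ` E" for y
    using that assms(1) unfolding d_def by (subst card_gt_0_iff) auto
  define c where "c e = r (g e) / d (g e)" for e
  have "0 < c e" if "e \<in> E" for e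
    using that r_pos d_pos unfolding c_def by auto
  moreover have "(\<Sum>e\<in>{e\<in>E. g e = y}. c e) = r y" if "y \<in> g ` E" for y
  proof -
    have "(\<Sum>e\<in>{e\<in>E. g e = y}. c e) = (\<Sum>e\<in>{e\<in>E. g e = y}. r y / d y)"
      unfolding c_def by (rule sum.cong) auto
    also have "\<dots> = r y"
      using d_pos[OF that] by (simp add: d_def)
    finally show ?thesis .
  qed
  ultimately show ?thesis by blast
qed

lemma positive_combination_in_rel_interior_convex_hull:
  fixes f :: "'i \<Rightarrow> 'a::euclidean_space"
  assumes "finite E" "\<forall>e\<in>E. 0 < c e" "sum c E = 1"
  shows "(\<Sum>e\<in>E. c e *\<^sub>R f e) \<in> rel_interior (convex hull (f ` E))"
proof -
  have "f ` E = (\<Union>e\<in>E. {f e})" by blast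
  then show ?thesis
    using assms by (auto simp: rel_interior_convex_hull_union[OF assms(1), of "\<lambda>e. {f e}"])
qed

theorem proposition3p2:
  fixes \<C> :: "((real^'m) \<times> (real^'n)) set set" and C :: "((real^'m) \<times> (real^'n)) set"
  assumes "vertex_subdivision \<C>" and "C \<in> \<C>" and "interior_cell C"
  shows "\<exists>w :: 'm \<Rightarrow> real. (\<forall>i. w i > 0) \<and> (\<Sum>i\<in>UNIV. w i) = 1 \<and>
           ((\<chi> i. w i), (\<chi> j. 1 / real CARD('n))) \<in> rel_interior C"
proof -
  obtain V where "V \<subseteq> prod_vertices" "C = convex hull V" "C \<noteq> {}"
    using assms(1,2) unfolding vertex_subdivision_def by blast
  then obtain E where C_eq: "C = convex hull (prod_vertex ` E)" and "E \<noteq> {}"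
    unfolding prod_vertices_eq_range by (metis convex_hull_empty image_empty subset_image_iff)
  have "finite E" by simp
  have rows: "fst ` E = UNIV" and columns: "snd ` E = UNIV"
    using assms(3) \<open>E \<noteq> {}\<close> C_eq
    by (simp_all add: interior_cell_hull_prod_vertex_rows interior_cell_hull_prod_vertex_columns)
  obtain c where c_pos: "\<forall>e\<in>E. 0 < c e"
    and column_sum: "\<And>j. (\<Sum>e\<in>{e\<in>E. snd e = j}. c e) = 1 / real CARD('n)"
    using exists_positive_weights_with_fibre_sums[of E snd "\<lambda>_. 1 / real CARD('n)"] columns
    by auto
  have "sum c E = 1"
    using sum.image_gen[of E c snd] by (simp add: columns column_sum)
  define p where "p = (\<Sum>e\<in>E. c e *\<^sub>R prod_vertex e)"
  have "p \<in> rel_interior C"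
    unfolding p_def C_eq
    using positive_combination_in_rel_interior_convex_hull \<open>finite E\<close> c_pos \<open>sum c E = 1\<close>
    by blast
  moreover have "snd p = (\<chi> j. 1 / real CARD('n))"
    by (simp add: vec_eq_iff p_def snd_sum_prod_vertex column_sum)
  moreover have "0 < fst p $ i" for i
    using rows c_pos unfolding p_def fst_sum_prod_vertex[OF \<open>finite E\<close>]
    by (intro sum_pos) force+
  moreover have "(\<Sum>i\<in>UNIV. fst p $ i) = 1"
    using sum.image_gen[of E c fst] \<open>sum c E = 1\<close> by (simp add: p_def fst_sum_prod_vertex rows)
  ultimately show ?thesis
    by (intro exI[of _ "\<lambda>i. fst p $ i"]) (metis prod.collapse vec_lambda_eta)
qed

end
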